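(* Consider the location-dependent model in which, for each edge $(i,j)\in\mathcal E$ with $i>j$, $y_{ij}\sim\mathbb P^{ij}_{x_i-x_j}$ independently. Let $\overline{\mathsf{Hel}}_\alpha^{\min}=\min\{\mathsf{Hel}_\alpha(\mathbb P_l^{ij}\|\mathbb P_k^{ij}):l\ne k,\ 0\le l,k<M,\ (i,j)\in\mathcal E\}$ and $\overline D_\alpha^{\min}=-\frac1{1-\alpha}\log\big(1-(1-\alpha)\overline{\mathsf{Hel}}_\alpha^{\min}\big)$. For any connected graph $\mathcal G$ and any $\delta>0$, $P_{\mathsf e}(\psi_{\mathrm{ml}})\le\frac1{(2n)^\delta-1}$ provided that \[ \sup_{0<\alpha<1}\{(1-\alpha)\overline{\mathsf{Hel}}_\alpha^{\min}\}\cdot\mathsf{mincut}\ge 8\tau^{\mathrm{cut}}+(\delta+8)\log(2n)+4\log M, \] and the same conclusion holds if instead $\sup_{0<\alpha<1}\{(1-\alpha)\overline{D}_\alpha^{\min}\}\cdot\mathsf{mincut}\ge 8\tau^{\mathrm{cut}}+(\delta+8)\log(2n)+4\log M$.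
   Context: $n\ge2$, $M\ge2$, $\mathcal X=\{0,\dots,M-1\}$ with a group operation $+$; $x_i-x_j:=x_i+(-x_j)$; $\boldsymbol x+l\cdot\mathbf1:=(x_1+l,\dots,x_n+l)$. $\mathcal G=(\mathcal V,\mathcal E)$ undirected on $\{1,\dots,n\}$; for each edge the measures $\mathbb P^{ij}_l$, $l\in\mathcal X$, are mutually absolutely continuous probability measures on an output space. $\mathrm{dist}(\boldsymbol w,\boldsymbol x)=1-\max_l\mathbb I\{\boldsymbol w=\boldsymbol x+l\cdot\mathbf1\}$; $P_{\mathsf e}(\psi)=\max_{\boldsymbol x}\mathbb P\{\mathrm{dist}(\psi(\boldsymbol y),\boldsymbol x)\ne0\mid\boldsymbol x\}$; $\psi_{\mathrm{ml}}(\boldsymbol y)=\arg\max_{\boldsymbol x}\mathbb P\{\boldsymbol y\mid\boldsymbol x\}$. $\mathsf{Hel}_\alpha(P\|Q)=\frac1{1-\alpha}[1-\int(\mathrm dP)^\alpha(\mathrm dQ)^{1-\alpha}]$ for $\alpha\in(0,1)$. $e(\mathcal S,\mathcal S^{\mathrm c})$: number of edges between $\mathcal S$ and its complement; $\mathsf{mincut}=\min_{\emptyset\ne\mathcal S\subsetneq\mathcal V}e(\mathcal S,\mathcal S^{\mathrm c})$; $\mathcal N(m)=\{\mathcal S\subseteq\mathcal V:e(\mathcal S,\mathcal S^{\mathrm c})\le m\}$; $\tau^{\mathrm{cut}}=\max_k\frac1k\log|\mathcal N(k\cdot\mathsf{mincut})|$ over positive integers $k$. *)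

theory Defs
  imports "HOL-Probability.Probability"
begin

(* Vertex set V = {1..n}. An undirected graph is a set E of pairs (i,j) with
   1 <= j < i <= n (each undirected edge stored once, with i > j). *)

definition graph_ok :: "nat \<Rightarrow> (nat \<times> nat) set \<Rightarrow> bool" where
  "graph_ok n E \<longleftrightarrow> E \<subseteq> {(i,j). 1 \<le> j \<and> j < i \<and> i \<le> n}"

definition adj :: "(nat \<times> nat) set \<Rightarrow> (nat \<times> nat) set" where
  "adj E = E \<union> converse E"

definition graph_connected :: "nat \<Rightarrow> (nat \<times> nat) set \<Rightarrow> bool" where
  "graph_connected n E \<longleftrightarrow> (\<forall>i\<in>{1..n}. \<forall>j\<in>{1..n}. (i,j) \<in> (adj E)\<^sup>*)"

definition cut_size :: "nat \<Rightarrow> (nat \<times> nat) set \<Rightarrow> nat set \<Rightarrow> nat" where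
  "cut_size n E S = card {e \<in> E. (fst e \<in> S \<and> snd e \<in> {1..n} - S) \<or> (snd e \<in> S \<and> fst e \<in> {1..n} - S)}"

definition mincut :: "nat \<Rightarrow> (nat \<times> nat) set \<Rightarrow> nat" where
  "mincut n E = Min {cut_size n E S | S. S \<noteq> {} \<and> S \<subset> {1..n}}"

definition cutN :: "nat \<Rightarrow> (nat \<times> nat) set \<Rightarrow> nat \<Rightarrow> nat set set" where
  "cutN n E m = {S. S \<subseteq> {1..n} \<and> cut_size n E S \<le> m}"

definition tau_cut :: "nat \<Rightarrow> (nat \<times> nat) set \<Rightarrow> real" where
  "tau_cut n E = (SUP k\<in>{1::nat..}. ln (real (card (cutN n E (k * mincut n E)))) / real k)"

(* Renyi-type Hellinger divergence Hel_alpha(P||Q) for P = p\<cdot>mu, Q = q\<cdot>mu (densities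
   w.r.t. a common dominating measure mu):  1/(1-alpha) [1 - \<integral> p^alpha q^(1-alpha) dmu] *)
definition hel :: "real \<Rightarrow> 'b measure \<Rightarrow> ('b \<Rightarrow> real) \<Rightarrow> ('b \<Rightarrow> real) \<Rightarrow> real" where
  "hel \<alpha> \<mu> p q = (1 - (\<integral>y. p y powr \<alpha> * q y powr (1 - \<alpha>) \<partial>\<mu>)) / (1 - \<alpha>)"

definition labels :: "nat \<Rightarrow> (nat \<Rightarrow> 'g) set" where
  "labels n = {1..n} \<rightarrow>\<^sub>E (UNIV :: 'g set)"

definition shift :: "nat \<Rightarrow> (nat \<Rightarrow> 'g::group_add) \<Rightarrow> 'g \<Rightarrow> (nat \<Rightarrow> 'g)" where
  "shift n x l = (\<lambda>i\<in>{1..n}. x i + l)"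

definition ldist :: "nat \<Rightarrow> (nat \<Rightarrow> 'g::group_add) \<Rightarrow> (nat \<Rightarrow> 'g) \<Rightarrow> nat" where
  "ldist n w x = (if \<exists>l. w = shift n x l then 0 else 1)"

(* law of y = (y_e)_{e\<in>E} given x: independent y_ij ~ P^{ij}_{x_i - x_j}, P^e_l = f e l \<cdot> mu e *)
definition obs :: "(nat \<times> nat) set \<Rightarrow> (nat \<times> nat \<Rightarrow> 'b measure) \<Rightarrow>
    (nat \<times> nat \<Rightarrow> 'g::group_add \<Rightarrow> 'b \<Rightarrow> real) \<Rightarrow> (nat \<Rightarrow> 'g) \<Rightarrow> (nat \<times> nat \<Rightarrow> 'b) measure" where
  "obs E mu f x = (\<Pi>\<^sub>M e\<in>E. density (mu e) (\<lambda>y. ennreal (f e (x (fst e) - x (snd e)) y)))"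

(* likelihood P{y | x} (density w.r.t. the product of the dominating measures) *)
definition lik :: "(nat \<times> nat) set \<Rightarrow> (nat \<times> nat \<Rightarrow> 'g::group_add \<Rightarrow> 'b \<Rightarrow> real) \<Rightarrow>
    (nat \<Rightarrow> 'g) \<Rightarrow> (nat \<times> nat \<Rightarrow> 'b) \<Rightarrow> real" where
  "lik E f x y = (\<Prod>e\<in>E. f e (x (fst e) - x (snd e)) (y e))"

definition is_ml :: "nat \<Rightarrow> (nat \<times> nat) set \<Rightarrow> (nat \<times> nat \<Rightarrow> 'b measure) \<Rightarrow>
    (nat \<times> nat \<Rightarrow> 'g::{group_add,finite} \<Rightarrow> 'b \<Rightarrow> real) \<Rightarrow> ((nat \<times> nat \<Rightarrow> 'b) \<Rightarrow> (nat \<Rightarrow> 'g)) \<Rightarrow> bool" where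
  "is_ml n E mu f psi \<longleftrightarrow>
     psi \<in> measurable (\<Pi>\<^sub>M e\<in>E. mu e) (count_space (labels n)) \<and>
     (\<forall>y\<in>space (\<Pi>\<^sub>M e\<in>E. mu e). psi y \<in> labels n \<and> (\<forall>w\<in>labels n. lik E f w y \<le> lik E f (psi y) y))"

definition err_prob :: "nat \<Rightarrow> (nat \<times> nat) set \<Rightarrow> (nat \<times> nat \<Rightarrow> 'b measure) \<Rightarrow>
    (nat \<times> nat \<Rightarrow> 'g::{group_add,finite} \<Rightarrow> 'b \<Rightarrow> real) \<Rightarrow> ((nat \<times> nat \<Rightarrow> 'b) \<Rightarrow> (nat \<Rightarrow> 'g)) \<Rightarrow> real" where
  "err_prob n E mu f psi = Max ((\<lambda>x. measure (obs E mu f x)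
       {y \<in> space (obs E mu f x). ldist n (psi y) x \<noteq> 0}) ` labels n)"

definition hel_min :: "(nat \<times> nat) set \<Rightarrow> (nat \<times> nat \<Rightarrow> 'b measure) \<Rightarrow>
    (nat \<times> nat \<Rightarrow> 'g \<Rightarrow> 'b \<Rightarrow> real) \<Rightarrow> real \<Rightarrow> real" where
  "hel_min E mu f \<alpha> = Min {hel \<alpha> (mu e) (f e l) (f e k) | e l k. e \<in> E \<and> l \<noteq> k}"

definition D_min :: "(nat \<times> nat) set \<Rightarrow> (nat \<times> nat \<Rightarrow> 'b measure) \<Rightarrow>
    (nat \<times> nat \<Rightarrow> 'g \<Rightarrow> 'b \<Rightarrow> real) \<Rightarrow> real \<Rightarrow> real" where
  "D_min E mu f \<alpha> = - (1 / (1 - \<alpha>)) * ln (1 - (1 - \<alpha>) * hel_min E mu f \<alpha>)"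

end

theory Submission
  imports Defs
begin

text \<open>The ML estimator errs only if some labelling \<open>w\<close> that is not a global shift of the truth
  \<open>x\<close> is at least as likely as \<open>x\<close>. A Chernoff bound with exponent \<open>1 - \<alpha>\<close> bounds the
  probability of this by \<open>\<rho>\<^bsup>d(x,w)\<^esup>\<close>, where \<open>\<rho> = 1 - (1 - \<alpha>) Hel\<^sub>\<alpha>\<^sup>m\<^sup>i\<^sup>n\<close> and \<open>d(x,w)\<close>
  counts the edges on which the relative labels of \<open>w\<close> and \<open>x\<close> differ. Grouping the vertices by
  the offset \<open>- x\<^sub>i + w\<^sub>i\<close> encodes \<open>w\<close> injectively by at most \<open>M\<close> level sets, at least two of
  them nontrivial and all of them proper, whose cut sizes add up to at most \<open>2 d(x,w)\<close>. Hence the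
  union bound is at most \<open>M\<^sup>2 H\<^sup>2 (1 + H)\<^sup>M\<close>, where \<open>H\<close> sums \<open>\<rho>\<^bsup>e(S,S\<^sup>c)/2\<^esup>\<close> over the nontrivial
  vertex sets \<open>S\<close>. Splitting \<open>H\<close> into blocks of cut size between consecutive multiples of
  \<open>mincut\<close> and counting each block with \<open>\<tau>\<^sup>c\<^sup>u\<^sup>t\<close> gives \<open>H \<le> |E| e\<^bsup>2\<tau>\<^esup> \<rho>\<^bsup>mincut/2\<^esup>\<close>, which the
  threshold condition makes small enough.\<close>

section \<open>Level sets and cuts\<close>

lemma diff_eq_diff_iff_minus_add:
  fixes a b c d :: "'g::group_add"
  shows "a - b = c - d \<longleftrightarrow> - c + a = - d + b"
proof
  assume "a - b = c - d"
  then have "a = c + (- d + b)" by (metis add.assoc diff_add_cancel diff_conv_add_uminus)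
  then show "- c + a = - d + b" by (simp only: minus_add_cancel)
next
  assume "- c + a = - d + b"
  then have "a = c + (- d + b)" by (metis add_minus_cancel)
  then show "a - b = c - d" by (simp only: diff_conv_add_uminus add.assoc right_minus add_0_right)
qed

lemma graph_ok_subset: "graph_ok n E \<Longrightarrow> E \<subseteq> {1..n} \<times> {1..n}"
  unfolding graph_ok_def by auto

lemma graph_ok_finite: "graph_ok n E \<Longrightarrow> finite E"
  using finite_subset[OF graph_ok_subset] by simp

lemma graph_ok_card_le:
  assumes "graph_ok n E"
  shows "card E \<le> n\<^sup>2"
proof -
  have "card E \<le> card ({1..n} \<times> {1..n})"
    using assms by (intro card_mono graph_ok_subset) simp_all
  then show ?thesis by (simp add: card_cartesian_product power2_eq_square)
qed

lemma cut_size_empty [simp]: "cut_size n E {} = 0"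
  by (simp add: cut_size_def)

lemma cut_size_le_card: "graph_ok n E \<Longrightarrow> cut_size n E S \<le> card E"
  unfolding cut_size_def by (rule card_mono[OF graph_ok_finite]) auto

text \<open>Offsets are taken on the left, so that \<open>w\<close> is a shift \<open>x + l\<cdot>1\<close> exactly when one level set
  is all of \<open>{1..n}\<close>; the group need not be abelian.\<close>

definition level_set :: "nat \<Rightarrow> (nat \<Rightarrow> 'g::group_add) \<Rightarrow> (nat \<Rightarrow> 'g) \<Rightarrow> 'g \<Rightarrow> nat set" where
  "level_set n x w g = {i\<in>{1..n}. - x i + w i = g}"

definition disagreements :: "(nat \<times> nat) set \<Rightarrow> (nat \<Rightarrow> 'g::group_add) \<Rightarrow> (nat \<Rightarrow> 'g) \<Rightarrow> nat" where
  "disagreements E x w = card {e\<in>E. w (fst e) - w (snd e) \<noteq> x (fst e) - x (snd e)}"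

text \<open>An edge is cut by a level set only if its endpoints have different offsets, i.e. only if it is
  a disagreement, and then exactly the two level sets of its endpoints cut it.\<close>

lemma sum_cut_level_sets_le:
  fixes x w :: "nat \<Rightarrow> 'g::{group_add,finite}"
  assumes g: "graph_ok n E"
  shows "(\<Sum>g\<in>UNIV. cut_size n E (level_set n x w g)) \<le> 2 * disagreements E x w"
proof -
  define cuts where "cuts g e \<longleftrightarrow> (fst e \<in> level_set n x w g \<and> snd e \<in> {1..n} - level_set n x w g)
      \<or> (snd e \<in> level_set n x w g \<and> fst e \<in> {1..n} - level_set n x w g)" for g e
  define D where "D e \<longleftrightarrow> w (fst e) - w (snd e) \<noteq> x (fst e) - x (snd e)" for e
  have fE: "finite E" using graph_ok_finite[OF g] .
  have edge: "card {g. cuts g e} \<le> (if D e then 2 else 0)" if eE: "e \<in> E" for e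
  proof -
    obtain i j where e: "e = (i, j)" by fastforce
    have "i \<in> {1..n}" "j \<in> {1..n}" using g eE e unfolding graph_ok_def by auto
    then have "cuts g e \<longleftrightarrow> g \<in> {- x i + w i, - x j + w j} \<and> - x i + w i \<noteq> - x j + w j" for g
      unfolding cuts_def level_set_def e by auto
    moreover have "D e \<longleftrightarrow> - x i + w i \<noteq> - x j + w j"
      unfolding D_def e by (simp add: diff_eq_diff_iff_minus_add)
    ultimately have "{g. cuts g e} = (if D e then {- x i + w i, - x j + w j} else {})"
      by auto
    then show ?thesis by (simp add: card_insert_if)
  qed
  have "(\<Sum>g\<in>UNIV. cut_size n E (level_set n x w g)) = (\<Sum>g\<in>UNIV. \<Sum>e\<in>E. if cuts g e then 1 else 0)"
    unfolding cut_size_def cuts_def by (simp add: sum.inter_filter[OF fE, symmetric])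
  also have "\<dots> = (\<Sum>e\<in>E. card {g. cuts g e})"
    by (subst sum.swap) (simp add: sum.inter_filter[symmetric])
  also have "\<dots> \<le> (\<Sum>e\<in>E. if D e then 2 else 0)"
    by (rule sum_mono) (rule edge)
  also have "\<dots> = 2 * disagreements E x w"
    by (simp add: disagreements_def D_def sum.If_cases[OF fE]) (metis Collect_conj_eq Collect_mem_eq)
  finally show ?thesis .
qed

definition nontrivial_subsets :: "nat \<Rightarrow> nat set set" where
  "nontrivial_subsets n = {S. S \<subseteq> {1..n} \<and> S \<noteq> {} \<and> S \<noteq> {1..n}}"

definition proper_subsets :: "nat \<Rightarrow> nat set set" where
  "proper_subsets n = {S. S \<subseteq> {1..n} \<and> S \<noteq> {1..n}}"

definition non_shifts :: "nat \<Rightarrow> (nat \<Rightarrow> 'g::group_add) \<Rightarrow> (nat \<Rightarrow> 'g) set" where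
  "non_shifts n x = {w \<in> labels n. \<not> (\<exists>l. w = shift n x l)}"

lemma finite_nontrivial_subsets: "finite (nontrivial_subsets n)"
  by (rule finite_subset[of _ "Pow {1..n}"]) (auto simp: nontrivial_subsets_def)

lemma finite_proper_subsets: "finite (proper_subsets n)"
  by (rule finite_subset[of _ "Pow {1..n}"]) (auto simp: proper_subsets_def)

lemma proper_subsets_eq: "n \<ge> 1 \<Longrightarrow> proper_subsets n = insert {} (nontrivial_subsets n)"
  by (auto simp: proper_subsets_def nontrivial_subsets_def)

lemma finite_labels: "finite (labels n :: (nat \<Rightarrow> 'g::finite) set)"
  unfolding labels_def by (rule finite_PiE) auto

lemma labels_nonempty: "labels n \<noteq> {}"
  unfolding labels_def by (simp add: PiE_eq_empty_iff)

lemma finite_non_shifts: "finite (non_shifts n x :: (nat \<Rightarrow> 'g::{finite,group_add}) set)"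
  by (rule finite_subset[OF _ finite_labels]) (auto simp: non_shifts_def)

lemma inj_on_level_sets: "inj_on (\<lambda>w g. level_set n x w g) (labels n)"
proof (rule inj_onI)
  fix w w' assume w: "w \<in> labels n" and w': "w' \<in> labels n"
    and eq: "(\<lambda>g. level_set n x w g) = (\<lambda>g. level_set n x w' g)"
  show "w = w'"
  proof (rule PiE_ext[OF w[unfolded labels_def] w'[unfolded labels_def]])
    fix i assume i: "i \<in> {1..n}"
    then have "i \<in> level_set n x w (- x i + w i)" by (simp add: level_set_def)
    then have "i \<in> level_set n x w' (- x i + w i)" using eq by metis
    then show "w i = w' i" by (simp add: level_set_def)
  qed
qed

lemma level_set_eq_all_imp_shift:
  assumes w: "w \<in> labels n" and all: "level_set n x w g = {1..n}"
  shows "w = shift n x g"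
proof (rule PiE_ext[OF w[unfolded labels_def]])
  show "shift n x g \<in> {1..n} \<rightarrow>\<^sub>E UNIV" by (simp add: shift_def)
  fix i assume i: "i \<in> {1..n}"
  then have "i \<in> level_set n x w g" using all by simp
  then have "- x i + w i = g" by (simp add: level_set_def)
  then have "w i = x i + g" by (metis add_minus_cancel)
  then show "w i = shift n x g i" using i by (simp add: shift_def)
qed

definition level_pattern :: "nat \<Rightarrow> 'g \<times> 'g \<Rightarrow> 'g \<Rightarrow> nat set set" where
  "level_pattern n p g = (if g = fst p \<or> g = snd p then nontrivial_subsets n else proper_subsets n)"

text \<open>The level sets of a non-shift are all proper; those containing vertex 1 and some vertex
  outside it are moreover nonempty.\<close>

lemma level_sets_in_level_pattern:
  fixes x :: "nat \<Rightarrow> 'g::group_add"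
  assumes n: "n \<ge> 1" and w: "w \<in> non_shifts n x"
  shows "\<exists>p. fst p \<noteq> snd p \<and> (\<lambda>g. level_set n x w g) \<in> PiE UNIV (level_pattern n p)"
proof -
  have wl: "w \<in> labels n" using w by (simp add: non_shifts_def)
  have proper: "level_set n x w g \<in> proper_subsets n" for g
  proof -
    have "level_set n x w g \<noteq> {1..n}"
      using level_set_eq_all_imp_shift[OF wl] w by (auto simp: non_shifts_def)
    then show ?thesis by (auto simp: proper_subsets_def level_set_def)
  qed
  define a where "a = - x 1 + w 1"
  have a: "1 \<in> level_set n x w a" using n by (simp add: level_set_def a_def)
  have "level_set n x w a \<subseteq> {1..n}" "level_set n x w a \<noteq> {1..n}"
    using proper[of a] by (auto simp: proper_subsets_def)
  then obtain j where j: "j \<in> {1..n}" "j \<notin> level_set n x w a" by blast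
  define b where "b = - x j + w j"
  have b: "j \<in> level_set n x w b" using j by (simp add: level_set_def b_def)
  have "a \<noteq> b" using j by (auto simp: level_set_def b_def)
  moreover have "level_set n x w g \<in> level_pattern n (a, b) g" for g
    using proper[of g] a b by (auto simp: level_pattern_def proper_subsets_def nontrivial_subsets_def)
  ultimately show ?thesis by (intro exI[of _ "(a, b)"]) (simp add: PiE_iff)
qed

lemma sum_UN_le:
  fixes g :: "'a \<Rightarrow> 'b::ordered_comm_monoid_add"
  assumes K: "finite K" and A: "\<And>k. k \<in> K \<Longrightarrow> finite (A k)"
    and nonneg: "\<And>x. x \<in> (\<Union>k\<in>K. A k) \<Longrightarrow> 0 \<le> g x"
  shows "sum g (\<Union>k\<in>K. A k) \<le> (\<Sum>k\<in>K. sum g (A k))"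
proof -
  have "(\<Union>k\<in>K. A k) = snd ` Sigma K A" by force
  moreover have "sum g (snd ` Sigma K A) \<le> sum (g \<circ> snd) (Sigma K A)"
    using K A by (intro sum_image_le) (auto intro!: nonneg)
  moreover have "sum (g \<circ> snd) (Sigma K A) = (\<Sum>k\<in>K. sum g (A k))"
    using sum.Sigma[OF K, of A "\<lambda>_. g"] A by (simp add: split_def comp_def)
  ultimately show ?thesis by simp
qed

lemma prod_level_pattern_le:
  fixes p :: "'g::finite \<times> 'g" and h :: "nat set \<Rightarrow> real"
  assumes p: "fst p \<noteq> snd p" and n: "n \<ge> 1" and H: "sum h (nontrivial_subsets n) = H" "0 \<le> H"
    and h_empty: "h {} = 1"
  shows "(\<Prod>g\<in>UNIV. \<Sum>X\<in>level_pattern n p g. h X) \<le> H\<^sup>2 * (1 + H) ^ CARD('g)"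
proof -
  have proper: "sum h (proper_subsets n) = 1 + H"
    using proper_subsets_eq[OF n] finite_nontrivial_subsets[of n] H h_empty
    by (simp add: nontrivial_subsets_def)
  have "(\<Prod>g\<in>UNIV. \<Sum>X\<in>level_pattern n p g. h X) = (\<Prod>g\<in>UNIV. if g \<in> {fst p, snd p} then H else 1 + H)"
    by (rule prod.cong) (auto simp: level_pattern_def H proper)
  also have "\<dots> = (\<Prod>g\<in>UNIV \<inter> {g. g \<in> {fst p, snd p}}. H) * (\<Prod>g\<in>UNIV \<inter> - {g. g \<in> {fst p, snd p}}. 1 + H)"
    by (rule prod.If_cases) simp
  also have "\<dots> = H\<^sup>2 * (1 + H) ^ card (UNIV - {fst p, snd p})"
  proof -
    have "UNIV \<inter> {g. g \<in> {fst p, snd p}} = {fst p, snd p}"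
      and "UNIV \<inter> - {g. g \<in> {fst p, snd p}} = UNIV - {fst p, snd p}" by auto
    then show ?thesis using p by (simp add: power2_eq_square)
  qed
  also have "\<dots> \<le> H\<^sup>2 * (1 + H) ^ CARD('g)"
    by (intro mult_left_mono power_increasing card_mono) (use H in auto)
  finally show ?thesis .
qed

lemma power_disagreements_le_prod_cuts:
  fixes x w :: "nat \<Rightarrow> 'g::{group_add,finite}"
  assumes g: "graph_ok n E" and q: "0 \<le> q" "q \<le> 1"
  shows "q ^ disagreements E x w \<le> (\<Prod>g\<in>UNIV. sqrt q ^ cut_size n E (level_set n x w g))"
proof -
  have "q ^ disagreements E x w = sqrt q ^ (2 * disagreements E x w)"
    using q by (simp add: power_mult)
  also have "\<dots> \<le> sqrt q ^ (\<Sum>g\<in>UNIV. cut_size n E (level_set n x w g))"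
    using q sum_cut_level_sets_le[OF g] by (intro power_decreasing) auto
  finally show ?thesis by (simp add: power_sum)
qed

lemma sum_non_shifts_le:
  fixes x :: "nat \<Rightarrow> 'g::{group_add,finite}"
  assumes g: "graph_ok n E" and n: "n \<ge> 1" and q: "0 \<le> q" "q \<le> 1"
    and H: "H = (\<Sum>X\<in>nontrivial_subsets n. sqrt q ^ cut_size n E X)"
  shows "(\<Sum>w\<in>non_shifts n x. q ^ disagreements E x w) \<le> (real CARD('g))\<^sup>2 * (H\<^sup>2 * (1 + H) ^ CARD('g))"
proof -
  define h where "h X = sqrt q ^ cut_size n E X" for X
  define L where "L w = (\<lambda>g. level_set n x w g)" for w
  define pairs where "pairs = {p :: 'g \<times> 'g. fst p \<noteq> snd p}"
  have h_nonneg: "0 \<le> h X" for X using q by (simp add: h_def)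
  have H_nonneg: "0 \<le> H" unfolding H by (intro sum_nonneg) (simp add: q)
  have fin_pattern: "finite (PiE UNIV (level_pattern n p))" for p :: "'g \<times> 'g"
    by (intro finite_PiE) (auto simp: level_pattern_def finite_nontrivial_subsets finite_proper_subsets)
  have inj: "inj_on L (non_shifts n x)"
    unfolding L_def by (rule inj_on_subset[OF inj_on_level_sets]) (auto simp: non_shifts_def)
  have "(\<Sum>w\<in>non_shifts n x. q ^ disagreements E x w) \<le> (\<Sum>w\<in>non_shifts n x. \<Prod>g\<in>UNIV. h (L w g))"
    unfolding h_def L_def by (intro sum_mono power_disagreements_le_prod_cuts[OF g q])
  also have "\<dots> = (\<Sum>T\<in>L ` non_shifts n x. \<Prod>g\<in>UNIV. h (T g))"
    by (simp add: sum.reindex[OF inj])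
  also have "\<dots> \<le> (\<Sum>T\<in>(\<Union>p\<in>pairs. PiE UNIV (level_pattern n p)). \<Prod>g\<in>UNIV. h (T g))"
    using level_sets_in_level_pattern[OF n] fin_pattern h_nonneg
    by (intro sum_mono2) (auto simp: L_def pairs_def prod_nonneg)
  also have "\<dots> \<le> (\<Sum>p\<in>pairs. \<Sum>T\<in>PiE UNIV (level_pattern n p). \<Prod>g\<in>UNIV. h (T g))"
    using fin_pattern h_nonneg by (intro sum_UN_le) (auto simp: prod_nonneg)
  also have "\<dots> = (\<Sum>p\<in>pairs. \<Prod>g\<in>UNIV. \<Sum>X\<in>level_pattern n p g. h X)"
    by (intro sum.cong refl prod_sum_PiE[symmetric])
       (auto simp: level_pattern_def finite_nontrivial_subsets finite_proper_subsets)
  also have "\<dots> \<le> (\<Sum>p\<in>pairs. H\<^sup>2 * (1 + H) ^ CARD('g))"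
    using n H_nonneg by (intro sum_mono prod_level_pattern_le) (auto simp: pairs_def H h_def)
  also have "\<dots> \<le> (real CARD('g))\<^sup>2 * (H\<^sup>2 * (1 + H) ^ CARD('g))"
  proof -
    have "card pairs \<le> card (UNIV :: ('g \<times> 'g) set)" by (rule card_mono) auto
    also have "\<dots> = CARD('g) * CARD('g)"
      by (metis UNIV_Times_UNIV card_cartesian_product)
    finally have "real (card pairs) \<le> (real CARD('g))\<^sup>2"
      by (simp add: power2_eq_square flip: of_nat_mult)
    then show ?thesis using H_nonneg by (simp add: mult_right_mono)
  qed
  finally show ?thesis .
qed

section \<open>Counting cuts\<close>

lemma finite_cutN: "finite (cutN n E m)"
  by (rule finite_subset[of _ "Pow {1..n}"]) (auto simp: cutN_def)

lemma card_cutN_pos: "0 < card (cutN n E m)"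
proof -
  have "{} \<in> cutN n E m" by (simp add: cutN_def)
  then show ?thesis using finite_cutN card_gt_0_iff by blast
qed

lemma card_cutN_le: "card (cutN n E m) \<le> 2 ^ n"
proof -
  have "card (cutN n E m) \<le> card (Pow {1..n})" by (rule card_mono) (auto simp: cutN_def)
  then show ?thesis by (simp add: card_Pow)
qed

lemma bdd_above_tau_cut:
  "bdd_above ((\<lambda>k. ln (real (card (cutN n E (k * mincut n E)))) / real k) ` {1::nat..})"
proof (rule bdd_aboveI2)
  fix k :: nat assume k: "k \<in> {1..}"
  define c where "c = real (card (cutN n E (k * mincut n E)))"
  have c: "1 \<le> c" unfolding c_def using card_cutN_pos by (simp add: Suc_le_eq)
  then have "0 \<le> ln c" by simp
  then have "ln c / real k \<le> ln c" using k by (simp add: divide_le_eq mult_le_cancel_left1)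
  also have "\<dots> \<le> c" using c ln_le_minus_one[of c] by simp
  also have "\<dots> \<le> 2 ^ n"
    unfolding c_def using card_cutN_le by (metis of_nat_le_iff of_nat_numeral of_nat_power)
  finally show "ln c / real k \<le> 2 ^ n" .
qed

lemma card_cutN_le_exp_tau_cut:
  assumes "1 \<le> k"
  shows "real (card (cutN n E (k * mincut n E))) \<le> exp (real k * tau_cut n E)"
proof -
  define c where "c = real (card (cutN n E (k * mincut n E)))"
  have "ln c / real k \<le> tau_cut n E"
    unfolding tau_cut_def c_def by (rule cSUP_upper[OF _ bdd_above_tau_cut]) (use assms in simp)
  then have "ln c \<le> real k * tau_cut n E" using assms by (simp add: divide_le_eq mult.commute)
  have "c = exp (ln c)" using card_cutN_pos by (simp add: c_def)
  also have "\<dots> \<le> exp (real k * tau_cut n E)" using \<open>ln c \<le> real k * tau_cut n E\<close> by simp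
  finally show ?thesis unfolding c_def .
qed

lemma tau_cut_nonneg: "0 \<le> tau_cut n E"
proof -
  have "1 \<le> real (card (cutN n E (mincut n E)))"
    using card_cutN_pos by (simp add: Suc_le_eq)
  also have "\<dots> \<le> exp (tau_cut n E)" using card_cutN_le_exp_tau_cut[of 1 n E] by simp
  finally show ?thesis by simp
qed

lemma mincut_le_cut_size:
  assumes "S \<in> nontrivial_subsets n"
  shows "mincut n E \<le> cut_size n E S"
  unfolding mincut_def
proof (rule Min_le)
  have "{cut_size n E S | S. S \<noteq> {} \<and> S \<subset> {1..n}} \<subseteq> cut_size n E ` Pow {1..n}" by auto
  then show "finite {cut_size n E S | S. S \<noteq> {} \<and> S \<subset> {1..n}}" by (rule finite_subset) simp
  show "cut_size n E S \<in> {cut_size n E S | S. S \<noteq> {} \<and> S \<subset> {1..n}}"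
    using assms by (auto simp: nontrivial_subsets_def)
qed

lemma edges_nonempty_if_mincut_pos:
  assumes "n \<ge> 2" "1 \<le> mincut n E"
  shows "E \<noteq> {}"
proof
  assume "E = {}"
  have "2 \<in> {1..n}" "2 \<notin> {1::nat}" using assms(1) by simp_all
  then have "{1} \<noteq> {1..n}" by blast
  moreover have "{1} \<subseteq> {1..n}" using assms(1) by simp
  ultimately have "{1} \<in> nontrivial_subsets n" by (simp add: nontrivial_subsets_def)
  then have "mincut n E \<le> cut_size n E {1}" by (rule mincut_le_cut_size)
  moreover have "cut_size n E {1} = 0" using \<open>E = {}\<close> by (simp add: cut_size_def)
  ultimately show False using assms(2) by simp
qed

lemma sum_cut_block_le:
  assumes mincut_pos: "1 \<le> mincut n E" and r: "0 \<le> r" "r \<le> 1" and k: "1 \<le> k"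
    and small: "exp (tau_cut n E) * r ^ mincut n E \<le> 1"
  shows "(\<Sum>X\<in>{X \<in> nontrivial_subsets n. cut_size n E X div mincut n E = k}. r ^ cut_size n E X)
           \<le> exp (2 * tau_cut n E) * r ^ mincut n E"
proof -
  define m where "m = mincut n E"
  define t where "t = tau_cut n E"
  define block where "block = {X \<in> nontrivial_subsets n. cut_size n E X div m = k}"
  have m: "0 < m" using mincut_pos by (simp add: m_def)
  have bounds: "k * m \<le> cut_size n E X" "cut_size n E X < (k + 1) * m" if "X \<in> block" for X
    using that dividend_less_div_times[OF m, of "cut_size n E X"] by (auto simp: block_def)
  have "r ^ cut_size n E X \<le> (r ^ m) ^ k" if "X \<in> block" for X
  proof -
    have "r ^ cut_size n E X \<le> r ^ (m * k)"
      using bounds(1)[OF that] r by (intro power_decreasing) (simp_all add: mult.commute)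
    then show ?thesis by (simp add: power_mult)
  qed
  then have "(\<Sum>X\<in>block. r ^ cut_size n E X) \<le> real (card block) * (r ^ m) ^ k"
    by (rule sum_bounded_above)
  also have "card block \<le> card (cutN n E ((k + 1) * m))"
  proof (rule card_mono[OF finite_cutN], rule subsetI)
    fix X assume X: "X \<in> block"
    then have "X \<subseteq> {1..n}" by (simp add: block_def nontrivial_subsets_def)
    then show "X \<in> cutN n E ((k + 1) * m)" using bounds(2)[OF X] by (simp add: cutN_def)
  qed
  then have "real (card block) * (r ^ m) ^ k \<le> exp (real (k + 1) * t) * (r ^ m) ^ k"
    using card_cutN_le_exp_tau_cut[of "k + 1" n E] r
    by (intro mult_right_mono) (simp_all add: m_def t_def)
  also have "\<dots> = exp t * (exp t * r ^ m) ^ k"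
    by (simp only: exp_of_nat_mult power_Suc power_mult_distrib Suc_eq_plus1[symmetric] mult.assoc)
  also have "\<dots> \<le> exp t * (exp t * r ^ m) ^ 1"
    using k r small by (intro mult_left_mono power_decreasing) (auto simp: m_def t_def)
  also have "\<dots> = exp (2 * t) * r ^ m" by (simp add: mult_exp_exp)
  finally show ?thesis by (simp add: block_def m_def t_def)
qed

text \<open>Splitting the nontrivial cuts into blocks between consecutive multiples of \<open>mincut\<close> puts the
  \<open>k\<close>-th block inside \<open>N((k + 1) mincut)\<close>, whose size is controlled by \<open>\<tau>\<^sup>c\<^sup>u\<^sup>t\<close>.\<close>

lemma sum_nontrivial_cuts_le:
  assumes g: "graph_ok n E" and mincut_pos: "1 \<le> mincut n E" and r: "0 \<le> r" "r \<le> 1"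
    and small: "exp (tau_cut n E) * r ^ mincut n E \<le> 1"
  shows "(\<Sum>X\<in>nontrivial_subsets n. r ^ cut_size n E X)
           \<le> real (card E) * (exp (2 * tau_cut n E) * r ^ mincut n E)"
proof -
  define m where "m = mincut n E"
  define block where "block k = {X \<in> nontrivial_subsets n. cut_size n E X div m = k}" for k
  have "nontrivial_subsets n \<subseteq> (\<Union>k\<in>{1..card E}. block k)"
  proof
    fix X assume X: "X \<in> nontrivial_subsets n"
    have "m \<le> cut_size n E X" "cut_size n E X \<le> card E"
      using mincut_le_cut_size[OF X] cut_size_le_card[OF g] by (simp_all add: m_def)
    then have "m div m \<le> cut_size n E X div m" "cut_size n E X div m \<le> card E"
      by (auto intro: div_le_mono order_trans[OF div_le_dividend])
    then have "cut_size n E X div m \<in> {1..card E}" using mincut_pos by (simp add: m_def)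
    then show "X \<in> (\<Union>k\<in>{1..card E}. block k)" using X by (auto simp: block_def)
  qed
  then have "(\<Sum>X\<in>nontrivial_subsets n. r ^ cut_size n E X)
      \<le> (\<Sum>k\<in>{1..card E}. \<Sum>X\<in>block k. r ^ cut_size n E X)"
    using r finite_nontrivial_subsets
    by (intro order_trans[OF sum_mono2 sum_UN_le]) (auto simp: block_def)
  also have "\<dots> \<le> (\<Sum>k\<in>{1..card E}. exp (2 * tau_cut n E) * r ^ mincut n E)"
    using mincut_pos r small by (intro sum_mono) (simp add: block_def m_def sum_cut_block_le)
  finally show ?thesis by simp
qed

context
  fixes A B P K w :: real and M :: nat
  assumes A: "1 \<le> A" and B: "4 \<le> B" and P: "1 < P" and M: "1 \<le> M"
    and w: "0 \<le> w" and K: "0 \<le> K" "K \<le> B\<^sup>2 / 4"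
    and small: "w\<^sup>2 * (A ^ 8 * P * B ^ 8 * real M ^ 4) \<le> 2"
begin

lemma threshold_mult_le_one: "A * w \<le> 1"
proof -
  have "B \<le> B ^ 8" using B power_increasing[of 1 8 B] by simp
  then have "1 * 1 * 2 * 1 \<le> A ^ 6 * P * B ^ 8 * real M ^ 4"
    using A B P M by (intro mult_mono) auto
  then have "(A * w)\<^sup>2 * 2 \<le> (A * w)\<^sup>2 * (A ^ 6 * P * B ^ 8 * real M ^ 4)"
    by (intro mult_left_mono) auto
  also have "\<dots> \<le> 2"
    using small by (simp add: power_mult_distrib algebra_simps power_numeral_reduce)
  finally have "(A * w)\<^sup>2 \<le> 1\<^sup>2" by simp
  then show "A * w \<le> 1" by (rule power2_le_imp_le) simp
qed

lemma threshold_square_le: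
  assumes H: "0 \<le> H" "H \<le> K * A\<^sup>2 * w"
  shows "(real M * H)\<^sup>2 * (2048 * P) \<le> 1"
proof -
  define D where "D = A ^ 4 * real M ^ 2 * P * B ^ 8"
  have "(real M * H)\<^sup>2 \<le> (real M * (K * A\<^sup>2 * w))\<^sup>2"
    using H by (intro power_mono mult_left_mono) auto
  then have "(real M * H)\<^sup>2 * D \<le> (real M * (K * A\<^sup>2 * w))\<^sup>2 * D"
    using A P B by (intro mult_right_mono) (auto simp: D_def)
  also have "\<dots> = K\<^sup>2 * (w\<^sup>2 * (A ^ 8 * P * B ^ 8 * real M ^ 4))"
    by (simp add: D_def power_mult_distrib algebra_simps power_numeral_reduce)
  also have "\<dots> \<le> K\<^sup>2 * 2"
    using small by (simp add: mult_left_mono)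
  also have "\<dots> \<le> (B\<^sup>2 / 4)\<^sup>2 * 2"
    using K by (intro mult_right_mono power_mono) auto
  finally have "((real M * H)\<^sup>2 * A ^ 4 * real M ^ 2 * 8 * P * B ^ 4) * B ^ 4 \<le> 1 * B ^ 4"
    by (simp add: D_def power_divide algebra_simps power_numeral_reduce)
  then have bound: "(real M * H)\<^sup>2 * (A ^ 4 * real M ^ 2 * 8 * P * B ^ 4) \<le> 1"
    unfolding mult.assoc[symmetric] by (rule mult_right_le_imp_le) (use B in simp)
  have "1 * 1 * 8 * P * 4 ^ 4 \<le> A ^ 4 * real M ^ 2 * 8 * P * B ^ 4"
    using A B P M by (intro mult_mono power_mono) auto
  then have "(real M * H)\<^sup>2 * (2048 * P) \<le> (real M * H)\<^sup>2 * (A ^ 4 * real M ^ 2 * 8 * P * B ^ 4)"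
    by (intro mult_left_mono) auto
  with bound show ?thesis by linarith
qed

lemma threshold_union_bound_le:
  assumes H: "0 \<le> H" "H \<le> K * A\<^sup>2 * w"
  shows "real M ^ 2 * (H\<^sup>2 * (1 + H) ^ M) \<le> 1 / (P - 1)"
proof -
  have MH: "(real M * H)\<^sup>2 * (2048 * P) \<le> 1" by (rule threshold_square_le[OF H])
  moreover have "(real M * H)\<^sup>2 \<le> (real M * H)\<^sup>2 * (2048 * P)"
    using P by (simp add: mult_le_cancel_left1)
  ultimately have "(real M * H)\<^sup>2 \<le> 1\<^sup>2" by simp
  then have "real M * H \<le> 1" by (rule power2_le_imp_le) simp
  have "(1 + H) ^ M \<le> exp H ^ M" using H by (intro power_mono) auto
  also have "\<dots> = exp (real M * H)" by (simp add: exp_of_nat_mult)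
  also have "\<dots> \<le> exp 1" using \<open>real M * H \<le> 1\<close> by simp
  also have "\<dots> \<le> 3" by (rule exp_le)
  finally have "real M ^ 2 * (H\<^sup>2 * (1 + H) ^ M) \<le> real M ^ 2 * (H\<^sup>2 * 3)"
    by (intro mult_left_mono) auto
  also have "\<dots> = (real M * H)\<^sup>2 * 3" by (simp add: power_mult_distrib)
  also have "\<dots> \<le> 1 / (P - 1)"
  proof -
    have "(real M * H)\<^sup>2 * 3 * (P - 1) \<le> (real M * H)\<^sup>2 * (2048 * P)"
      unfolding mult.assoc using P by (intro mult_left_mono) auto
    then show ?thesis using MH P by (simp add: pos_le_divide_eq)
  qed
  finally show ?thesis .
qed

end

lemma ln2_less_threshold:
  fixes n M :: nat
  assumes "n \<ge> 2" "0 < \<delta>" "1 \<le> M"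
  shows "ln 2 < 8 * tau_cut n E + (\<delta> + 8) * ln (2 * real n) + 4 * ln (real M)"
proof -
  have "ln 2 < (\<delta> + 8) * ln (2::real)" using assms by simp
  also have "\<dots> \<le> (\<delta> + 8) * ln (2 * real n)" using assms by (intro mult_left_mono) auto
  moreover have "0 \<le> ln (real M)" using assms by simp
  ultimately show ?thesis using tau_cut_nonneg[of n E] by linarith
qed

lemma sum_non_shifts_le_threshold:
  fixes x :: "nat \<Rightarrow> 'g::{group_add,finite}"
  assumes g: "graph_ok n E" and n: "n \<ge> 2" and q: "0 \<le> q" "q \<le> 1"
    and mincut_pos: "1 \<le> mincut n E" and \<delta>: "0 < \<delta>"
    and small: "q ^ mincut n E \<le> 2 * exp (- (8 * tau_cut n E + (\<delta> + 8) * ln (2 * real n)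
                 + 4 * ln (real CARD('g))))"
  shows "(\<Sum>w\<in>non_shifts n x. q ^ disagreements E x w) \<le> 1 / ((2 * real n) powr \<delta> - 1)"
proof -
  define A where "A = exp (tau_cut n E)"
  define B where "B = 2 * real n"
  define P where "P = B powr \<delta>"
  define M where "M = CARD('g)"
  define w where "w = sqrt q ^ mincut n E"
  define H where "H = (\<Sum>X\<in>nontrivial_subsets n. sqrt q ^ cut_size n E X)"
  have A: "1 \<le> A" using tau_cut_nonneg by (simp add: A_def)
  have B: "4 \<le> B" using n by (simp add: B_def)
  have P: "1 < P" using B \<delta> by (simp add: P_def)
  have M: "1 \<le> M" by (simp add: M_def Suc_le_eq)
  have K: "real (card E) \<le> B\<^sup>2 / 4"
    using graph_ok_card_le[OF g] by (simp add: B_def power_mult_distrib flip: of_nat_power)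
  define R where "R = 8 * tau_cut n E + (\<delta> + 8) * ln B + 4 * ln (real M)"
  have "exp ((\<delta> + 8) * ln B) = B powr (\<delta> + 8)" using B by (simp add: powr_def)
  also have "\<dots> = P * B ^ 8" using B by (simp add: P_def powr_add powr_numeral)
  finally have "exp ((\<delta> + 8) * ln B) = P * B ^ 8" .
  moreover have "exp (4 * ln (real M)) = real M ^ 4"
    using M by (simp add: exp_of_nat_mult[of 4, simplified])
  ultimately have exp_R: "exp R = A ^ 8 * P * B ^ 8 * real M ^ 4"
    by (simp add: R_def exp_add A_def exp_of_nat_mult[of 8, simplified])
  have "w\<^sup>2 = q ^ mincut n E"
    using q by (simp add: w_def power_mult[symmetric] mult.commute[of _ 2] power_mult)
  also have "\<dots> \<le> 2 * exp (- R)" using small by (simp only: R_def B_def M_def)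
  finally have "w\<^sup>2 * exp R \<le> 2 * exp (- R) * exp R" by (rule mult_right_mono) simp
  also have "\<dots> = 2" by (simp add: exp_minus)
  finally have w: "w\<^sup>2 * (A ^ 8 * P * B ^ 8 * real M ^ 4) \<le> 2" by (simp only: exp_R)
  have "A * w \<le> 1"
    using threshold_mult_le_one[OF A B P M _ _ K w] q by (simp add: w_def)
  then have H: "H \<le> real (card E) * A\<^sup>2 * w"
    using sum_nontrivial_cuts_le[OF g mincut_pos, of "sqrt q"] q
    by (simp add: H_def A_def w_def mult_exp_exp power2_eq_square mult.assoc)
  have "(\<Sum>w\<in>non_shifts n x. q ^ disagreements E x w) \<le> (real M)\<^sup>2 * (H\<^sup>2 * (1 + H) ^ M)"
    using sum_non_shifts_le[OF g _ q H_def] n by (simp add: M_def)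
  also have "\<dots> \<le> 1 / (P - 1)"
    using threshold_union_bound_le[OF A B P M _ _ K w] q H
    by (simp add: w_def H_def sum_nonneg)
  finally show ?thesis by (simp add: P_def B_def)
qed

section \<open>A Chernoff bound for likelihood ratios\<close>

lemma powr_mult_powr_le_convex_comb:
  fixes a b :: real
  assumes "0 \<le> a" "0 \<le> b" "0 < \<alpha>" "\<alpha> < 1"
  shows "a powr \<alpha> * b powr (1 - \<alpha>) \<le> \<alpha> * a + (1 - \<alpha>) * b"
proof (cases "a = 0 \<or> b = 0")
  case True
  then show ?thesis using assms by auto
next
  case False
  then show ?thesis using assms by (intro Youngs_inequality_0) auto
qed

lemma mult_powr_divide_eq:
  fixes p q :: real
  assumes "0 \<le> p" "\<alpha> < 1"
  shows "p * (q / p) powr (1 - \<alpha>) = p powr \<alpha> * q powr (1 - \<alpha>)"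
proof (cases "p = 0")
  case False
  then have "p * (q / p) powr (1 - \<alpha>) = p powr (1 - (1 - \<alpha>)) * q powr (1 - \<alpha>)"
    using assms by (simp add: powr_divide powr_diff)
  then show ?thesis by simp
qed (use assms in simp)

lemma powr_mult_powr_one_minus_self:
  fixes a :: real
  shows "0 \<le> a \<Longrightarrow> a powr \<alpha> * a powr (1 - \<alpha>) = a"
  by (cases "a = 0") (simp_all add: powr_add[symmetric])

lemma prob_space_density_integral:
  fixes p :: "'b \<Rightarrow> real"
  assumes meas: "p \<in> borel_measurable M" and nonneg: "\<And>y. y \<in> space M \<Longrightarrow> 0 \<le> p y"
    and prob: "prob_space (density M (\<lambda>y. ennreal (p y)))"
  shows "integrable M p" and "integral\<^sup>L M p = 1"
proof -
  have "(\<integral>\<^sup>+ y. ennreal (p y) \<partial>M) = emeasure (density M (\<lambda>y. ennreal (p y))) (space M)"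
    using meas by (simp add: emeasure_density)
  also have "\<dots> = 1"
    using prob_space.emeasure_space_1[OF prob] by simp
  finally have nn: "(\<integral>\<^sup>+ y. ennreal (p y) \<partial>M) = 1" .
  show int: "integrable M p"
    using meas nonneg nn by (intro integrableI_nonneg) auto
  have "ennreal (integral\<^sup>L M p) = 1"
    using nn nn_integral_eq_integral[OF int] nonneg by simp
  moreover have "0 \<le> integral\<^sup>L M p" using nonneg by (intro integral_nonneg_AE AE_I2) auto
  ultimately show "integral\<^sup>L M p = 1" by simp
qed

lemma hellinger_affinity_integrable:
  fixes p q :: "'b \<Rightarrow> real"
  assumes "p \<in> borel_measurable M" "q \<in> borel_measurable M"
    and "\<And>y. y \<in> space M \<Longrightarrow> 0 \<le> p y" "\<And>y. y \<in> space M \<Longrightarrow> 0 \<le> q y"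
    and "prob_space (density M (\<lambda>y. ennreal (p y)))" "prob_space (density M (\<lambda>y. ennreal (q y)))"
    and "0 < \<alpha>" "\<alpha> < 1"
  shows "integrable M (\<lambda>t. p t powr \<alpha> * q t powr (1 - \<alpha>))"
proof (rule Bochner_Integration.integrable_bound)
  show "integrable M (\<lambda>t. \<alpha> * p t + (1 - \<alpha>) * q t)"
    using assms by (intro Bochner_Integration.integrable_add integrable_mult_right
        prob_space_density_integral(1)) auto
  show "(\<lambda>t. p t powr \<alpha> * q t powr (1 - \<alpha>)) \<in> borel_measurable M" using assms by measurable
  show "AE t in M. norm (p t powr \<alpha> * q t powr (1 - \<alpha>)) \<le> norm (\<alpha> * p t + (1 - \<alpha>) * q t)"
    using assms powr_mult_powr_le_convex_comb by (intro AE_I2) auto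
qed

lemma nn_integral_density_powr_ratio:
  fixes p q :: "'b \<Rightarrow> real"
  assumes meas: "p \<in> borel_measurable M" "q \<in> borel_measurable M"
    and nonneg: "\<And>y. y \<in> space M \<Longrightarrow> 0 \<le> p y" "\<And>y. y \<in> space M \<Longrightarrow> 0 \<le> q y"
    and prob: "prob_space (density M (\<lambda>y. ennreal (p y)))" "prob_space (density M (\<lambda>y. ennreal (q y)))"
    and \<alpha>: "0 < \<alpha>" "\<alpha> < 1"
  shows "(\<integral>\<^sup>+ t. ennreal ((q t / p t) powr (1 - \<alpha>)) \<partial>density M (\<lambda>y. ennreal (p y)))
           = ennreal (\<integral>t. p t powr \<alpha> * q t powr (1 - \<alpha>) \<partial>M)"
proof -
  have "(\<integral>\<^sup>+ t. ennreal ((q t / p t) powr (1 - \<alpha>)) \<partial>density M (\<lambda>y. ennreal (p y)))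
      = (\<integral>\<^sup>+ t. ennreal (p t) * ennreal ((q t / p t) powr (1 - \<alpha>)) \<partial>M)"
    using meas by (intro nn_integral_density) auto
  also have "\<dots> = (\<integral>\<^sup>+ t. ennreal (p t powr \<alpha> * q t powr (1 - \<alpha>)) \<partial>M)"
    using nonneg \<alpha> by (intro nn_integral_cong) (simp add: ennreal_mult[symmetric] mult_powr_divide_eq)
  also have "\<dots> = ennreal (\<integral>t. p t powr \<alpha> * q t powr (1 - \<alpha>) \<partial>M)"
    using assms by (intro nn_integral_eq_integral hellinger_affinity_integrable) auto
  finally show ?thesis .
qed

text \<open>Outside \<open>I\<close> the factors are an arbitrary probability measure, so that the family is a
  \<open>product_prob_space\<close>.\<close>

definition density_family :: "'i set \<Rightarrow> ('i \<Rightarrow> 'b measure) \<Rightarrow> ('i \<Rightarrow> 'b \<Rightarrow> real) \<Rightarrow> 'i \<Rightarrow> 'b measure" where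
  "density_family I M p i =
     (if i \<in> I then density (M i) (\<lambda>y. ennreal (p i y)) else return (count_space UNIV) undefined)"

lemma product_prob_space_density_family:
  assumes "\<And>i. i \<in> I \<Longrightarrow> prob_space (density (M i) (\<lambda>y. ennreal (p i y)))"
  shows "product_prob_space (density_family I M p)"
proof -
  have "prob_space (density_family I M p i)" for i
    by (cases "i \<in> I") (auto simp: density_family_def assms intro: prob_space_return)
  then show ?thesis
    by (intro product_prob_space.intro product_sigma_finite.intro product_prob_space_axioms.intro)
       (auto intro: prob_space_imp_sigma_finite)
qed

lemma PiM_density_family:
  "(\<Pi>\<^sub>M i\<in>I. density (M i) (\<lambda>y. ennreal (p i y))) = PiM I (density_family I M p)"
  by (rule PiM_cong) (auto simp: density_family_def)

lemma prod_powr_ratio_ge_one: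
  fixes a b :: "'i \<Rightarrow> real"
  assumes a: "\<And>i. i \<in> I \<Longrightarrow> 0 < a i" and b: "\<And>i. i \<in> I \<Longrightarrow> 0 \<le> b i"
    and le: "(\<Prod>i\<in>I. a i) \<le> (\<Prod>i\<in>I. b i)" and \<alpha>: "\<alpha> < 1"
  shows "1 \<le> (\<Prod>i\<in>I. (b i / a i) powr (1 - \<alpha>))"
proof -
  have "1 \<le> (\<Prod>i\<in>I. b i) / (\<Prod>i\<in>I. a i)"
    using le a by (simp add: prod_pos)
  then have "1 \<le> ((\<Prod>i\<in>I. b i) / (\<Prod>i\<in>I. a i)) powr (1 - \<alpha>)"
    using \<alpha> by (intro ge_one_powr_ge_zero) auto
  also have "\<dots> = (\<Prod>i\<in>I. (b i / a i) powr (1 - \<alpha>))"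
    using a b by (simp add: prod_dividef[symmetric] prod_powr_distrib less_imp_le)
  finally show ?thesis .
qed

text \<open>Chernoff bound with exponent \<open>1 - \<alpha>\<close>: on the event \<open>\<Prod> p \<le> \<Prod> q\<close> the product of the
  factors \<open>(q/p)\<^bsup>1-\<alpha>\<^esup>\<close> is at least \<open>1\<close>, and that product integrates factorwise.\<close>

lemma product_likelihood_ratio_tail:
  fixes M :: "'i \<Rightarrow> 'b measure" and p q :: "'i \<Rightarrow> 'b \<Rightarrow> real"
  assumes I: "finite I"
    and meas: "\<And>i. i \<in> I \<Longrightarrow> p i \<in> borel_measurable (M i)" "\<And>i. i \<in> I \<Longrightarrow> q i \<in> borel_measurable (M i)"
    and nonneg: "\<And>i y. i \<in> I \<Longrightarrow> y \<in> space (M i) \<Longrightarrow> 0 \<le> p i y"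
      "\<And>i y. i \<in> I \<Longrightarrow> y \<in> space (M i) \<Longrightarrow> 0 \<le> q i y"
    and prob: "\<And>i. i \<in> I \<Longrightarrow> prob_space (density (M i) (\<lambda>y. ennreal (p i y)))"
      "\<And>i. i \<in> I \<Longrightarrow> prob_space (density (M i) (\<lambda>y. ennreal (q i y)))"
    and \<alpha>: "0 < \<alpha>" "\<alpha> < 1"
  defines "P \<equiv> \<Pi>\<^sub>M i\<in>I. density (M i) (\<lambda>y. ennreal (p i y))"
  shows "{y \<in> space P. (\<Prod>i\<in>I. p i (y i)) \<le> (\<Prod>i\<in>I. q i (y i))} \<in> sets P"
    and "measure P {y \<in> space P. (\<Prod>i\<in>I. p i (y i)) \<le> (\<Prod>i\<in>I. q i (y i))}
           \<le> (\<Prod>i\<in>I. \<integral>t. p i t powr \<alpha> * q i t powr (1 - \<alpha>) \<partial>M i)"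
proof -
  define Q where "Q = density_family I M p"
  have Q: "Q i = density (M i) (\<lambda>y. ennreal (p i y))" if "i \<in> I" for i
    using that by (simp add: Q_def density_family_def)
  have P_eq: "P = PiM I Q" unfolding P_def Q_def by (rule PiM_density_family)
  interpret product_prob_space Q I
    unfolding Q_def by (rule product_prob_space_density_family[OF prob(1)])
  have Q_meas: "f \<in> borel_measurable (Q i)" if "i \<in> I" "f \<in> borel_measurable (M i)" for i f
    using that by (simp add: Q)
  define L where "L = {y \<in> space P. (\<Prod>i\<in>I. p i (y i)) \<le> (\<Prod>i\<in>I. q i (y i))}"
  show L_sets: "L \<in> sets P"
    unfolding L_def P_eq using meas Q_meas by measurable
  have AE_pos: "AE y in P. \<forall>i\<in>I. 0 < p i (y i)"
    unfolding P_eq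
  proof (rule AE_finite_allI[OF I])
    fix i assume i: "i \<in> I"
    have "AE t in Q i. 0 < p i t"
      unfolding Q[OF i] using meas(1)[OF i] by (subst AE_density) auto
    then show "AE y in PiM I Q. 0 < p i (y i)" by (rule AE_component[OF i])
  qed
  define G where "G i t = ennreal ((q i t / p i t) powr (1 - \<alpha>))" for i t
  have ind: "indicator L y \<le> (\<Prod>i\<in>I. G i (y i))" if pos: "\<forall>i\<in>I. 0 < p i (y i)" for y
  proof (cases "y \<in> L")
    case True
    then have "y i \<in> space (M i)" if "i \<in> I" for i
      using that by (auto simp: L_def P_def space_PiM)
    then have "1 \<le> (\<Prod>i\<in>I. (q i (y i) / p i (y i)) powr (1 - \<alpha>))"
      using True pos nonneg(2) \<alpha> by (intro prod_powr_ratio_ge_one) (auto simp: L_def)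
    then show ?thesis using True by (simp add: G_def prod_ennreal)
  qed simp
  have "emeasure P L = (\<integral>\<^sup>+ y. indicator L y \<partial>P)" using L_sets by simp
  also have "\<dots> \<le> (\<integral>\<^sup>+ y. (\<Prod>i\<in>I. G i (y i)) \<partial>P)"
    by (intro nn_integral_mono_AE eventually_mono[OF AE_pos] ind)
  also have "\<dots> = (\<Prod>i\<in>I. \<integral>\<^sup>+ t. G i t \<partial>Q i)"
  proof -
    have "(\<lambda>t. (q i t / p i t) powr (1 - \<alpha>)) \<in> borel_measurable (M i)" if "i \<in> I" for i
      using meas that by measurable
    then show ?thesis
      unfolding P_eq G_def by (intro product_nn_integral_prod[OF I]) (auto intro: Q_meas)
  qed
  also have "\<dots> = ennreal (\<Prod>i\<in>I. \<integral>t. p i t powr \<alpha> * q i t powr (1 - \<alpha>) \<partial>M i)"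
    using assms by (simp add: Q G_def nn_integral_density_powr_ratio prod_ennreal integral_nonneg_AE
        flip: prod_ennreal)
  finally show "measure P L \<le> (\<Prod>i\<in>I. \<integral>t. p i t powr \<alpha> * q i t powr (1 - \<alpha>) \<partial>M i)"
    unfolding P_eq by (simp add: emeasure_eq_measure prod_nonneg integral_nonneg_AE ennreal_le_iff)
qed

section \<open>Error probability of the maximum-likelihood estimator\<close>

text \<open>By \<open>one_minus_hel\<close> this is the largest affinity \<open>\<integral> p\<^sup>\<alpha> q\<^bsup>1-\<alpha>\<^esup>\<close> between the output laws of
  two distinct labels on an edge; \<open>D_min\<close> is minus its logarithm divided by \<open>1 - \<alpha>\<close>.\<close>

definition max_affinity :: "(nat \<times> nat) set \<Rightarrow> (nat \<times> nat \<Rightarrow> 'b measure) \<Rightarrow>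
    (nat \<times> nat \<Rightarrow> 'g \<Rightarrow> 'b \<Rightarrow> real) \<Rightarrow> real \<Rightarrow> real" where
  "max_affinity E mu f \<alpha> = 1 - (1 - \<alpha>) * hel_min E mu f \<alpha>"

lemma one_minus_hel: "\<alpha> < 1 \<Longrightarrow> 1 - (1 - \<alpha>) * hel \<alpha> M p q = (\<integral>t. p t powr \<alpha> * q t powr (1 - \<alpha>) \<partial>M)"
  by (simp add: hel_def)

lemma finite_hel_values:
  fixes f :: "nat \<times> nat \<Rightarrow> 'g::finite \<Rightarrow> 'b \<Rightarrow> real"
  assumes "finite E"
  shows "finite {hel \<alpha> (mu e) (f e l) (f e k) | e l k. e \<in> E \<and> l \<noteq> k}"
proof (rule finite_subset)
  show "{hel \<alpha> (mu e) (f e l) (f e k) | e l k. e \<in> E \<and> l \<noteq> k}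
      \<subseteq> (\<lambda>(e, l, k). hel \<alpha> (mu e) (f e l) (f e k)) ` (E \<times> UNIV \<times> UNIV)"
  proof
    fix z assume "z \<in> {hel \<alpha> (mu e) (f e l) (f e k) | e l k. e \<in> E \<and> l \<noteq> k}"
    then obtain e l k where "z = hel \<alpha> (mu e) (f e l) (f e k)" "e \<in> E" by blast
    then show "z \<in> (\<lambda>(e, l, k). hel \<alpha> (mu e) (f e l) (f e k)) ` (E \<times> UNIV \<times> UNIV)"
      by (intro image_eqI[of _ _ "(e, l, k)"]) auto
  qed
qed (use assms in simp)

lemma hel_min_le:
  fixes f :: "nat \<times> nat \<Rightarrow> 'g::finite \<Rightarrow> 'b \<Rightarrow> real"
  assumes "finite E" "e \<in> E" "l \<noteq> k"
  shows "hel_min E mu f \<alpha> \<le> hel \<alpha> (mu e) (f e l) (f e k)"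
  unfolding hel_min_def by (intro Min_le finite_hel_values) (use assms in blast)+

lemma max_affinity_nonneg:
  fixes f :: "nat \<times> nat \<Rightarrow> 'g::finite \<Rightarrow> 'b \<Rightarrow> real"
  assumes E: "finite E" "E \<noteq> {}" and M: "CARD('g) \<ge> 2" and \<alpha>: "\<alpha> < 1"
  shows "0 \<le> max_affinity E mu f \<alpha>"
proof -
  have "\<not> CARD('g) \<le> Suc 0" using M by simp
  then obtain l k :: 'g where "l \<noteq> k" by (auto simp: card_le_Suc0_iff_eq)
  then have "{hel \<alpha> (mu e) (f e l) (f e k) | e l k. e \<in> E \<and> l \<noteq> k} \<noteq> {}" using E by blast
  then have "hel_min E mu f \<alpha> \<in> {hel \<alpha> (mu e) (f e l) (f e k) | e l k. e \<in> E \<and> l \<noteq> k}"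
    unfolding hel_min_def using finite_hel_values[OF E(1)] by (rule Min_in[rotated])
  then obtain e l k where "hel_min E mu f \<alpha> = hel \<alpha> (mu e) (f e l) (f e k)" by blast
  then show ?thesis
    using \<alpha> by (simp add: max_affinity_def one_minus_hel integral_nonneg_AE)
qed

lemma prod_affinity_le_power_disagreements:
  fixes x w :: "nat \<Rightarrow> 'g::{group_add,finite}"
  assumes E: "finite E"
    and f_meas: "\<And>e l. e \<in> E \<Longrightarrow> f e l \<in> borel_measurable (mu e)"
    and f_nonneg: "\<And>e l y. e \<in> E \<Longrightarrow> y \<in> space (mu e) \<Longrightarrow> f e l y \<ge> 0"
    and P_prob: "\<And>e l. e \<in> E \<Longrightarrow> prob_space (density (mu e) (\<lambda>y. ennreal (f e l y)))"
    and \<alpha>: "\<alpha> < 1"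
  shows "(\<Prod>e\<in>E. \<integral>t. f e (x (fst e) - x (snd e)) t powr \<alpha> * f e (w (fst e) - w (snd e)) t powr (1 - \<alpha>) \<partial>mu e)
           \<le> max_affinity E mu f \<alpha> ^ disagreements E x w"
proof -
  define D where "D e \<longleftrightarrow> w (fst e) - w (snd e) \<noteq> x (fst e) - x (snd e)" for e
  have "(\<Prod>e\<in>E. \<integral>t. f e (x (fst e) - x (snd e)) t powr \<alpha> * f e (w (fst e) - w (snd e)) t powr (1 - \<alpha>) \<partial>mu e)
      \<le> (\<Prod>e\<in>E. if D e then max_affinity E mu f \<alpha> else 1)"
  proof (rule prod_mono, rule conjI)
    fix e assume e: "e \<in> E"
    let ?p = "f e (x (fst e) - x (snd e))" and ?q = "f e (w (fst e) - w (snd e))"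
    show "0 \<le> (\<integral>t. ?p t powr \<alpha> * ?q t powr (1 - \<alpha>) \<partial>mu e)"
      by (rule integral_nonneg_AE) simp
    show "(\<integral>t. ?p t powr \<alpha> * ?q t powr (1 - \<alpha>) \<partial>mu e) \<le> (if D e then max_affinity E mu f \<alpha> else 1)"
    proof (cases "D e")
      case True
      then have "hel_min E mu f \<alpha> \<le> hel \<alpha> (mu e) ?p ?q"
        using E e by (intro hel_min_le) (auto simp: D_def)
      then show ?thesis
        using True \<alpha> by (simp add: max_affinity_def one_minus_hel[symmetric] mult_left_mono)
    next
      case False
      then have "(\<integral>t. ?p t powr \<alpha> * ?q t powr (1 - \<alpha>) \<partial>mu e) = (\<integral>t. ?p t \<partial>mu e)"
        using f_nonneg[OF e] by (intro Bochner_Integration.integral_cong)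
          (auto simp: D_def powr_mult_powr_one_minus_self)
      also have "\<dots> = 1"
        using f_meas f_nonneg P_prob e by (intro prob_space_density_integral(2)) auto
      finally show ?thesis using False by simp
    qed
  qed
  also have "\<dots> = max_affinity E mu f \<alpha> ^ card {e \<in> E. D e}"
    using E by (simp add: prod.If_cases Int_def)
  finally show ?thesis by (simp add: disagreements_def D_def)
qed

lemma error_event_subset:
  assumes ml: "is_ml n E mu f psi" and x: "x \<in> labels n"
  shows "{y \<in> space (obs E mu f x). ldist n (psi y) x \<noteq> 0}
           \<subseteq> (\<Union>w\<in>non_shifts n x. {y \<in> space (obs E mu f x). lik E f x y \<le> lik E f w y})"
proof
  fix y assume y: "y \<in> {y \<in> space (obs E mu f x). ldist n (psi y) x \<noteq> 0}"
  then have "y \<in> space (\<Pi>\<^sub>M e\<in>E. mu e)" by (simp add: obs_def space_PiM)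
  then have "psi y \<in> labels n" "lik E f x y \<le> lik E f (psi y) y"
    using ml x unfolding is_ml_def by auto
  moreover have "\<not> (\<exists>l. psi y = shift n x l)" using y by (auto simp: ldist_def split: if_splits)
  ultimately show "y \<in> (\<Union>w\<in>non_shifts n x. {y \<in> space (obs E mu f x). lik E f x y \<le> lik E f w y})"
    using y by (auto simp: non_shifts_def)
qed

lemma error_prob_le_sum_non_shifts:
  fixes x :: "nat \<Rightarrow> 'g::{group_add,finite}" and psi :: "(nat \<times> nat \<Rightarrow> 'b) \<Rightarrow> (nat \<Rightarrow> 'g)"
  assumes g: "graph_ok n E"
    and f_meas: "\<And>e l. e \<in> E \<Longrightarrow> f e l \<in> borel_measurable (mu e)"
    and f_nonneg: "\<And>e l y. e \<in> E \<Longrightarrow> y \<in> space (mu e) \<Longrightarrow> f e l y \<ge> 0"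
    and P_prob: "\<And>e l. e \<in> E \<Longrightarrow> prob_space (density (mu e) (\<lambda>y. ennreal (f e l y)))"
    and ml: "is_ml n E mu f psi" and x: "x \<in> labels n"
    and \<alpha>: "0 < \<alpha>" "\<alpha> < 1"
  shows "measure (obs E mu f x) {y \<in> space (obs E mu f x). ldist n (psi y) x \<noteq> 0}
           \<le> (\<Sum>w\<in>non_shifts n x. max_affinity E mu f \<alpha> ^ disagreements E x w)"
proof -
  interpret prob_space "obs E mu f x"
    unfolding obs_def by (intro prob_space_PiM P_prob)
  define A where "A w = {y \<in> space (obs E mu f x). lik E f x y \<le> lik E f w y}" for w
  have tail: "A w \<in> sets (obs E mu f x)"
      "measure (obs E mu f x) (A w) \<le> (\<Prod>e\<in>E. \<integral>t. f e (x (fst e) - x (snd e)) t powr \<alpha>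
         * f e (w (fst e) - w (snd e)) t powr (1 - \<alpha>) \<partial>mu e)" for w
    using product_likelihood_ratio_tail[OF graph_ok_finite[OF g], where M = mu
        and p = "\<lambda>e. f e (x (fst e) - x (snd e))" and q = "\<lambda>e. f e (w (fst e) - w (snd e))"]
      f_meas f_nonneg P_prob \<alpha>
    unfolding A_def obs_def lik_def by auto
  have "measure (obs E mu f x) {y \<in> space (obs E mu f x). ldist n (psi y) x \<noteq> 0}
      \<le> measure (obs E mu f x) (\<Union>w\<in>non_shifts n x. A w)"
    using error_event_subset[OF ml x] tail(1) finite_non_shifts
    by (intro finite_measure_mono) (auto simp: A_def intro!: sets.finite_UN)
  also have "\<dots> \<le> (\<Sum>w\<in>non_shifts n x. measure (obs E mu f x) (A w))"
    using tail(1) by (intro finite_measure_subadditive_finite finite_non_shifts) auto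
  also have "\<dots> \<le> (\<Sum>w\<in>non_shifts n x. max_affinity E mu f \<alpha> ^ disagreements E x w)"
    by (intro sum_mono order_trans[OF tail(2)]
        prod_affinity_le_power_disagreements[OF graph_ok_finite[OF g] f_meas f_nonneg P_prob \<alpha>(2)])
  finally show ?thesis .
qed

text \<open>The supremum need not be attained, so we only get within \<open>ln 2\<close> of it; this is what the
  factor \<open>2\<close> in the bound absorbs.\<close>

lemma exists_alpha_below_SUP:
  fixes v :: "real \<Rightarrow> real"
  assumes cond: "R \<le> (SUP \<alpha>\<in>{0<..<1::real}. v \<alpha>) * c" and c: "0 < c" and R: "ln 2 < R"
  shows "\<exists>\<alpha>\<in>{0<..<1}. \<exists>t>0. t < v \<alpha> \<and> exp (- t * c) \<le> 2 * exp (- R)"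
proof -
  define s where "s = (SUP \<alpha>\<in>{0<..<1::real}. v \<alpha>)"
  define t where "t = s - ln 2 / c"
  have "ln 2 / c < s" using cond R c by (simp add: s_def divide_less_eq)
  then have t: "0 < t" by (simp add: t_def)
  have "- t * c = ln 2 - s * c" using c by (simp add: t_def algebra_simps)
  then have "exp (- t * c) = 2 * exp (- (s * c))" by (simp add: exp_diff exp_minus')
  also have "\<dots> \<le> 2 * exp (- R)" using cond by (simp add: s_def)
  finally have "exp (- t * c) \<le> 2 * exp (- R)" .
  moreover have "\<exists>\<alpha>\<in>{0<..<1}. t < v \<alpha>"
  proof (cases "bdd_above (v ` {0<..<1})")
    case True
    have "t < s" using c by (simp add: t_def)
    then show ?thesis unfolding s_def by (subst (asm) less_cSUP_iff[OF _ True]) auto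
  qed (unfold bdd_above_def, auto simp: not_le)
  ultimately show ?thesis using t by blast
qed

lemma exists_alpha_max_affinity_le:
  fixes f :: "nat \<times> nat \<Rightarrow> 'g::finite \<Rightarrow> 'b \<Rightarrow> real"
  assumes E: "finite E" "E \<noteq> {}" and M: "CARD('g) \<ge> 2" and c: "0 < c" and R: "ln 2 < R"
    and cond: "R \<le> (SUP \<alpha>\<in>{0<..<1::real}. (1 - \<alpha>) * hel_min E mu f \<alpha>) * c
             \<or> R \<le> (SUP \<alpha>\<in>{0<..<1::real}. (1 - \<alpha>) * D_min E mu f \<alpha>) * c"
  shows "\<exists>\<alpha>\<in>{0<..<1}. \<exists>t>0. max_affinity E mu f \<alpha> \<le> exp (- t) \<and> exp (- t * c) \<le> 2 * exp (- R)"
  using cond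
proof
  assume "R \<le> (SUP \<alpha>\<in>{0<..<1::real}. (1 - \<alpha>) * hel_min E mu f \<alpha>) * c"
  then obtain \<alpha> t where \<alpha>: "\<alpha> \<in> {0<..<1}" and t: "0 < t" "t < (1 - \<alpha>) * hel_min E mu f \<alpha>"
    "exp (- t * c) \<le> 2 * exp (- R)" using exists_alpha_below_SUP[OF _ c R] by blast
  have "max_affinity E mu f \<alpha> \<le> 1 + - t" using t by (simp add: max_affinity_def)
  also have "\<dots> \<le> exp (- t)" by (rule exp_ge_add_one_self)
  finally show ?thesis using \<alpha> t by blast
next
  assume "R \<le> (SUP \<alpha>\<in>{0<..<1::real}. (1 - \<alpha>) * D_min E mu f \<alpha>) * c"
  then obtain \<alpha> t where \<alpha>: "\<alpha> \<in> {0<..<1}" and t: "0 < t" "t < (1 - \<alpha>) * D_min E mu f \<alpha>"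
    "exp (- t * c) \<le> 2 * exp (- R)" using exists_alpha_below_SUP[OF _ c R] by blast
  then have "ln (max_affinity E mu f \<alpha>) < - t" by (simp add: D_min_def max_affinity_def)
  moreover have "0 \<le> max_affinity E mu f \<alpha>"
    using max_affinity_nonneg[OF E M, where mu = mu and f = f] \<alpha> by simp
  ultimately have "max_affinity E mu f \<alpha> \<le> exp (- t)"
  proof (cases "max_affinity E mu f \<alpha> = 0")
    case False
    then have "max_affinity E mu f \<alpha> = exp (ln (max_affinity E mu f \<alpha>))"
      using \<open>0 \<le> max_affinity E mu f \<alpha>\<close> by simp
    also have "\<dots> \<le> exp (- t)" using \<open>ln (max_affinity E mu f \<alpha>) < - t\<close> by simp
    finally show ?thesis .
  qed simp
  then show ?thesis using \<alpha> t by blast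
qed

theorem theorem5:
  fixes n :: nat and E :: "(nat \<times> nat) set"
    and mu :: "nat \<times> nat \<Rightarrow> 'b measure"
    and f :: "nat \<times> nat \<Rightarrow> 'g::{group_add,finite} \<Rightarrow> 'b \<Rightarrow> real"
    and psi :: "(nat \<times> nat \<Rightarrow> 'b) \<Rightarrow> (nat \<Rightarrow> 'g)"
    and \<delta> :: real
  assumes n2: "n \<ge> 2"
    and M2: "CARD('g) \<ge> 2"
    and graph: "graph_ok n E"
    and conn: "graph_connected n E"
    and f_meas: "\<And>e l. e \<in> E \<Longrightarrow> f e l \<in> borel_measurable (mu e)"
    and f_nonneg: "\<And>e l y. e \<in> E \<Longrightarrow> y \<in> space (mu e) \<Longrightarrow> f e l y \<ge> 0"
    and P_prob: "\<And>e l. e \<in> E \<Longrightarrow> prob_space (density (mu e) (\<lambda>y. ennreal (f e l y)))"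
    and P_ac: "\<And>e l k. e \<in> E \<Longrightarrow> absolutely_continuous
                 (density (mu e) (\<lambda>y. ennreal (f e l y))) (density (mu e) (\<lambda>y. ennreal (f e k y)))"
    and ml: "is_ml n E mu f psi"
    and \<delta>_pos: "\<delta> > 0"
    and cond:
      "(SUP \<alpha>\<in>{0<..<1::real}. (1 - \<alpha>) * hel_min E mu f \<alpha>) * real (mincut n E)
          \<ge> 8 * tau_cut n E + (\<delta> + 8) * ln (2 * real n) + 4 * ln (real CARD('g))
       \<or> (SUP \<alpha>\<in>{0<..<1::real}. (1 - \<alpha>) * D_min E mu f \<alpha>) * real (mincut n E)
          \<ge> 8 * tau_cut n E + (\<delta> + 8) * ln (2 * real n) + 4 * ln (real CARD('g))"
  shows "err_prob n E mu f psi \<le> 1 / ((2 * real n) powr \<delta> - 1)"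
proof -
  define R where "R = 8 * tau_cut n E + (\<delta> + 8) * ln (2 * real n) + 4 * ln (real CARD('g))"
  have R: "ln 2 < R" unfolding R_def using n2 \<delta>_pos M2 by (intro ln2_less_threshold) auto
  have "0 < ln (2::real)" by simp
  with R have "0 < R" by linarith
  then have m: "1 \<le> mincut n E" using cond by (cases "mincut n E") (auto simp: R_def)
  have E: "finite E" "E \<noteq> {}"
    using graph_ok_finite[OF graph] edges_nonempty_if_mincut_pos[OF n2 m] by auto
  obtain \<alpha> t where \<alpha>: "\<alpha> \<in> {0<..<1}" and t: "0 < t" "max_affinity E mu f \<alpha> \<le> exp (- t)"
      "exp (- t * real (mincut n E)) \<le> 2 * exp (- R)"
    using exists_alpha_max_affinity_le[OF E M2 _ R cond[folded R_def]] m by auto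
  have "measure (obs E mu f x) {y \<in> space (obs E mu f x). ldist n (psi y) x \<noteq> 0}
      \<le> 1 / ((2 * real n) powr \<delta> - 1)" if x: "x \<in> labels n" for x
  proof -
    have "measure (obs E mu f x) {y \<in> space (obs E mu f x). ldist n (psi y) x \<noteq> 0}
        \<le> (\<Sum>w\<in>non_shifts n x. max_affinity E mu f \<alpha> ^ disagreements E x w)"
      using \<alpha> by (intro error_prob_le_sum_non_shifts[OF graph f_meas f_nonneg P_prob ml x]) auto
    also have "\<dots> \<le> (\<Sum>w\<in>non_shifts n x. exp (- t) ^ disagreements E x w)"
      using max_affinity_nonneg[OF E M2, where mu = mu and f = f] \<alpha> t
      by (intro sum_mono power_mono) auto
    also have "\<dots> \<le> 1 / ((2 * real n) powr \<delta> - 1)"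
      using t by (intro sum_non_shifts_le_threshold[OF graph n2 _ _ m \<delta>_pos])
        (auto simp: R_def exp_of_nat_mult[symmetric] mult.commute)
    finally show ?thesis .
  qed
  then show ?thesis
    unfolding err_prob_def using finite_labels[where 'g = 'g] labels_nonempty by (subst Max_le_iff) auto
qed

end
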